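(* Fix $\alpha\in(0,1/2)$ and $q_1,q_3\in(0,1)$, and define $m^*(3/4,3/4)=16\alpha$, $m^*(3/4,1/4)=m^*(1/4,3/4)=\frac{8(1-2\alpha)}{3}$, $m^*(1/4,1/4)=\frac{16\alpha}{9}$, $m^*=\frac{16(4\alpha+3)}{9}$, $\overline{q}^*=\frac{8\alpha+3}{8\alpha+6}$, $\overline{\lambda}^*=1/m^*$, $$\overline{q}=\frac{1}{m^*}\Big[\big(m^*(\tfrac34,\tfrac34)+m^*(\tfrac34,\tfrac14)\big)q_3+\big(m^*(\tfrac14,\tfrac34)+m^*(\tfrac14,\tfrac14)\big)q_1\Big],$$ $$\overline{\lambda}=\frac{1}{m^*}\Big(m^*(\tfrac34,\tfrac34)\tfrac{1-q_3}{4}+m^*(\tfrac34,\tfrac14)\tfrac{3(1-q_3)}{4}+m^*(\tfrac14,\tfrac34)\tfrac{1-q_1}{4}+m^*(\tfrac14,\tfrac14)\tfrac{3(1-q_1)}{4}\Big).$$ Suppose one of the following holds: (1) $\alpha=1/4$ and $6q_3+2q_1>5$; (2) $\alpha<1/4$ and $(q_1,q_3)\in\{q_1\ge 1/4,\ 6q_3+2q_1>5\}\cup\{q_1<1/4,\ (12\alpha+3)q_3+(3-4\alpha)q_1>8\alpha+3\}$; (3) $\alpha>1/4$ and $(q_1,q_3)\in\{q_1\le 1/4,\ 6q_3+2q_1>5\}\cup\{q_1>1/4,\ (12\alpha+3)q_3+(3-4\alpha)q_1>8\alpha+3\}$. Then $\overline{q}>\overline{q}^*$ and $\overline{\lamb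da}<\overline{\lambda}^*$.
   Context: Interpretation: $m^*(x,e)$ is the steady-state mass of type-$(x,e)$ users under the status quo (quality $q^*(x)=x$, churn probability $(1-q(x))(1-e)$ per period, inflow masses $\alpha,1/2-\alpha,1/2-\alpha,\alpha$ for types $(3/4,3/4),(3/4,1/4),(1/4,3/4),(1/4,1/4)$); $\overline{q},\overline{\lambda}$ are the one-period experimental ARQ and churn rate of the treatment with qualities $q_1$ (segment $x=1/4$) and $q_3$ (segment $x=3/4$); $\overline{q}^*,\overline{\lambda}^*$ are the status quo values. *)

theory Defs
  imports Complex_Main
begin

definition mstar_hh :: "real \<Rightarrow> real" where "mstar_hh \<alpha> = 16 * \<alpha>"
definition mstar_hl :: "real \<Rightarrow> real" where "mstar_hl \<alpha> = 8 * (1 - 2*\<alpha>) / 3"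
definition mstar_lh :: "real \<Rightarrow> real" where "mstar_lh \<alpha> = 8 * (1 - 2*\<alpha>) / 3"
definition mstar_ll :: "real \<Rightarrow> real" where "mstar_ll \<alpha> = 16 * \<alpha> / 9"
definition mstar_tot :: "real \<Rightarrow> real" where "mstar_tot \<alpha> = 16 * (4*\<alpha> + 3) / 9"

definition qbar_star :: "real \<Rightarrow> real" where "qbar_star \<alpha> = (8*\<alpha> + 3) / (8*\<alpha> + 6)"
definition lambda_star :: "real \<Rightarrow> real" where "lambda_star \<alpha> = 1 / mstar_tot \<alpha>"

definition qbar :: "real \<Rightarrow> real \<Rightarrow> real \<Rightarrow> real" where
  "qbar \<alpha> q1 q3 = (1 / mstar_tot \<alpha>) *
     ((mstar_hh \<alpha> + mstar_hl \<alpha>) * q3 + (mstar_lh \<alpha> + mstar_ll \<alpha>) * q1)"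

definition lambda_bar :: "real \<Rightarrow> real \<Rightarrow> real \<Rightarrow> real" where
  "lambda_bar \<alpha> q1 q3 = (1 / mstar_tot \<alpha>) *
     (mstar_hh \<alpha> * ((1 - q3) / 4) + mstar_hl \<alpha> * (3 * (1 - q3) / 4)
      + mstar_lh \<alpha> * ((1 - q1) / 4) + mstar_ll \<alpha> * (3 * (1 - q1) / 4))"

end

theory Submission
  imports Defs
begin

text \<open>Both comparisons with the status quo are affine threshold conditions on \<open>(q1, q3)\<close>:
  \<open>qbar > qbar_star\<close> iff \<open>quality_margin > 0\<close> and \<open>lambda_bar < lambda_star\<close> iff
  \<open>churn_margin > 0\<close>. The two margins are linked by
  \<open>2 quality_margin = (4\<alpha> + 1) churn_margin + (4\<alpha> - 1)(1 - 4 q1)\<close>, so when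
  \<open>(4\<alpha> - 1)(1 - 4 q1) \<ge> 0\<close> a positive churn margin forces a positive quality margin, and when
  it is \<open>\<le> 0\<close> the implication goes the other way. The three regions of the statement are
  exactly these two sign cases.\<close>

definition quality_margin :: "real \<Rightarrow> real \<Rightarrow> real \<Rightarrow> real" where
  "quality_margin \<alpha> q1 q3 = (12*\<alpha> + 3)*q3 + (3 - 4*\<alpha>)*q1 - (8*\<alpha> + 3)"

definition churn_margin :: "real \<Rightarrow> real \<Rightarrow> real" where
  "churn_margin q1 q3 = 6*q3 + 2*q1 - 5"

lemma qbar_minus_qbar_star:
  fixes \<alpha> q1 q3 :: real
  assumes "4*\<alpha> + 3 \<noteq> 0"
  shows "qbar \<alpha> q1 q3 - qbar_star \<alpha> = quality_margin \<alpha> q1 q3 / (2*(4*\<alpha> + 3))"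
  using assms
  unfolding qbar_def qbar_star_def quality_margin_def
    mstar_tot_def mstar_hh_def mstar_hl_def mstar_lh_def mstar_ll_def
  by (simp add: divide_simps) (simp add: algebra_simps)

lemma lambda_bar_minus_lambda_star:
  fixes \<alpha> q1 q3 :: real
  assumes "4*\<alpha> + 3 \<noteq> 0"
  shows "lambda_bar \<alpha> q1 q3 - lambda_star \<alpha> = - 3 * churn_margin q1 q3 / (16*(4*\<alpha> + 3))"
  using assms
  unfolding lambda_bar_def lambda_star_def churn_margin_def
    mstar_tot_def mstar_hh_def mstar_hl_def mstar_lh_def mstar_ll_def
  by (simp add: divide_simps) (simp add: algebra_simps)

lemma qbar_star_less_qbar_iff:
  fixes \<alpha> q1 q3 :: real
  assumes "0 < 4*\<alpha> + 3"
  shows "qbar_star \<alpha> < qbar \<alpha> q1 q3 \<longleftrightarrow> 0 < quality_margin \<alpha> q1 q3"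
proof -
  have "qbar_star \<alpha> < qbar \<alpha> q1 q3 \<longleftrightarrow> 0 < qbar \<alpha> q1 q3 - qbar_star \<alpha>"
    by linarith
  then show ?thesis
    using assms by (simp add: qbar_minus_qbar_star zero_less_divide_iff)
qed

lemma lambda_bar_less_lambda_star_iff:
  fixes \<alpha> q1 q3 :: real
  assumes "0 < 4*\<alpha> + 3"
  shows "lambda_bar \<alpha> q1 q3 < lambda_star \<alpha> \<longleftrightarrow> 0 < churn_margin q1 q3"
proof -
  have "lambda_bar \<alpha> q1 q3 < lambda_star \<alpha> \<longleftrightarrow> lambda_bar \<alpha> q1 q3 - lambda_star \<alpha> < 0"
    by linarith
  then show ?thesis
    using assms by (simp add: lambda_bar_minus_lambda_star zero_less_divide_iff)
qed

lemma quality_margin_churn_margin: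
  fixes \<alpha> q1 q3 :: real
  shows "2 * quality_margin \<alpha> q1 q3 = (4*\<alpha> + 1) * churn_margin q1 q3 + (4*\<alpha> - 1)*(1 - 4*q1)"
  unfolding quality_margin_def churn_margin_def by (simp add: algebra_simps)

lemma quality_margin_pos_if_churn_margin_pos:
  fixes \<alpha> q1 q3 :: real
  assumes "0 < 4*\<alpha> + 1" "0 \<le> (4*\<alpha> - 1)*(1 - 4*q1)" "0 < churn_margin q1 q3"
  shows "0 < quality_margin \<alpha> q1 q3"
proof -
  have "0 < (4*\<alpha> + 1) * churn_margin q1 q3"
    using assms(1,3) by simp
  then show ?thesis
    using assms(2) quality_margin_churn_margin[of \<alpha> q1 q3] by linarith
qed

lemma churn_margin_pos_if_quality_margin_pos:
  fixes \<alpha> q1 q3 :: real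
  assumes "0 < 4*\<alpha> + 1" "(4*\<alpha> - 1)*(1 - 4*q1) \<le> 0" "0 < quality_margin \<alpha> q1 q3"
  shows "0 < churn_margin q1 q3"
proof -
  have "0 < (4*\<alpha> + 1) * churn_margin q1 q3"
    using assms(2,3) quality_margin_churn_margin[of \<alpha> q1 q3] by linarith
  then show ?thesis
    using assms(1) by (simp add: zero_less_mult_iff)
qed

theorem corollary1:
  fixes \<alpha> q1 q3 :: real
  assumes "0 < \<alpha>" "\<alpha> < 1/2"
    and "0 < q1" "q1 < 1" "0 < q3" "q3 < 1"
    and "(\<alpha> = 1/4 \<and> 6*q3 + 2*q1 > 5)
       \<or> (\<alpha> < 1/4 \<and> ((q1 \<ge> 1/4 \<and> 6*q3 + 2*q1 > 5)
                      \<or> (q1 < 1/4 \<and> (12*\<alpha> + 3)*q3 + (3 - 4*\<alpha>)*q1 > 8*\<alpha> + 3)))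
       \<or> (\<alpha> > 1/4 \<and> ((q1 \<le> 1/4 \<and> 6*q3 + 2*q1 > 5)
                      \<or> (q1 > 1/4 \<and> (12*\<alpha> + 3)*q3 + (3 - 4*\<alpha>)*q1 > 8*\<alpha> + 3)))"
  shows "qbar \<alpha> q1 q3 > qbar_star \<alpha> \<and> lambda_bar \<alpha> q1 q3 < lambda_star \<alpha>"
proof -
  have pos: "0 < 4*\<alpha> + 1" "0 < 4*\<alpha> + 3"
    using assms(1) by simp_all
  have "(0 \<le> (4*\<alpha> - 1)*(1 - 4*q1) \<and> 0 < churn_margin q1 q3)
      \<or> ((4*\<alpha> - 1)*(1 - 4*q1) \<le> 0 \<and> 0 < quality_margin \<alpha> q1 q3)"
    using assms(7) unfolding quality_margin_def churn_margin_def
    by (auto simp: zero_le_mult_iff mult_le_0_iff)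
  then have "0 < quality_margin \<alpha> q1 q3 \<and> 0 < churn_margin q1 q3"
    using pos(1) quality_margin_pos_if_churn_margin_pos churn_margin_pos_if_quality_margin_pos
    by blast
  then show ?thesis
    using pos(2) qbar_star_less_qbar_iff lambda_bar_less_lambda_star_iff by blast
qed

end
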